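(* Let $F$ be a distribution function whose hazard rate $h$ satisfies (H), $h(t)=o(t^{-1}\log t)$ as $t\to\infty$, and $\limsup_{t\to\infty}t\,h(t)^2/h(1/h(t))<\infty$. Let $M>0$ and $K\in B(F,M)$. Then for all positive real numbers $a$ and $b$, $$\big(\mathsf T_K\overline{\mathsf M_aF}\big)(t)-\overline{\mathsf M_aF}(t)=o\big(\overline{\mathsf M_bF}(t)\big)\qquad(t\to\infty).$$
   Context: For a distribution function $K$, $\overline K=1-K$; for real $c$, $\mathsf M_cK$ is the distribution of $cY$ with $Y\sim K$, so $\overline{\mathsf M_cF}(t)=\overline F(t/c)$ for $c>0$. The hazard rate is $h=F'/\overline F$, assumed to exist for all large $t$, so that $\overline F(t)=\overline F(t_0)\exp(-\int_{t_0}^th(u)\,du)$. Condition (H): $h$ is regularly varying, $\lim_{t\to\infty}th(t)=+\infty$, $\lim_{t\to\infty}h(t)=0$. For $M>0$, $B(F,M)$ is the set of distribution functions $K$ such that $\overline K(x)\le M\overline F(x)$ and $\overline{\mathsf M_{-1}K}(x)\le M\overline F(x)$ for all $x\ge0$. The operator $\mathsf T_K$ is $\mathsf T_Kf(t)=\int_{-\infty}^{t/2}f(t-x)\,dK(x)$. *)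

theory Defs
  imports "HOL-Analysis.Analysis" "HOL-Library.Landau_Symbols"
begin

definition distribution_function :: "(real \<Rightarrow> real) \<Rightarrow> bool" where
  "distribution_function F \<longleftrightarrow> mono F \<and> (\<forall>x. continuous (at_right x) F)
     \<and> (F \<longlongrightarrow> 0) at_bot \<and> (F \<longlongrightarrow> 1) at_top"

definition tail :: "(real \<Rightarrow> real) \<Rightarrow> real \<Rightarrow> real" where
  "tail K t = 1 - K t"

text \<open>M_c K for c > 0: distribution of c Y, i.e. t \<mapsto> K (t / c).\<close>
definition scale_df :: "real \<Rightarrow> (real \<Rightarrow> real) \<Rightarrow> real \<Rightarrow> real" where
  "scale_df c K t = K (t / c)"

text \<open>Tail of M_{-1} K at x: P(-Y > x) = P(Y < -x), via the Lebesgue-Stieltjes measure of K.\<close>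
definition neg_tail :: "(real \<Rightarrow> real) \<Rightarrow> real \<Rightarrow> real" where
  "neg_tail K x = measure (interval_measure K) {..< -x}"

definition regularly_varying :: "(real \<Rightarrow> real) \<Rightarrow> bool" where
  "regularly_varying h \<longleftrightarrow> (\<forall>\<^sub>F t in at_top. h t > 0) \<and>
     (\<exists>\<rho>::real. \<forall>c>0. ((\<lambda>t. h (c * t) / h t) \<longlongrightarrow> c powr \<rho>) at_top)"

definition cond_H :: "(real \<Rightarrow> real) \<Rightarrow> bool" where
  "cond_H h \<longleftrightarrow> regularly_varying h \<and> filterlim (\<lambda>t. t * h t) at_top at_top
     \<and> (h \<longlongrightarrow> 0) at_top"

definition hazard_rate :: "(real \<Rightarrow> real) \<Rightarrow> (real \<Rightarrow> real) \<Rightarrow> bool" where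
  "hazard_rate F h \<longleftrightarrow> (\<exists>t0. \<forall>t\<ge>t0. F t < 1 \<and> (F has_real_derivative (h t * (1 - F t))) (at t))"

definition B_class :: "(real \<Rightarrow> real) \<Rightarrow> real \<Rightarrow> (real \<Rightarrow> real) set" where
  "B_class F M = {K. distribution_function K \<and>
     (\<forall>x\<ge>0. tail K x \<le> M * tail F x \<and> neg_tail K x \<le> M * tail F x)}"

definition T_op :: "(real \<Rightarrow> real) \<Rightarrow> (real \<Rightarrow> real) \<Rightarrow> real \<Rightarrow> real" where
  "T_op K f t = (LINT x:{..t/2}|interval_measure K. f (t - x))"

end

theory Submission
  imports Defs "HOL-Probability.Probability" "HOL-Real_Asymp.Real_Asymp"
begin

text \<open>
  For f the tail of M_a F and L = sqrt t, splitting the integral defining T_K f(t) at x = -L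
  and x = L and using the tail bounds of K in B(F,M) gives
  |T_K f(t) - f(t)| <= f(t - sqrt t) - f(t + sqrt t) + 2 M f(t/2) Fbar(sqrt t).
  Since t h(t) tends to infinity, t^p Fbar(t) is eventually nonincreasing for every p, so
  Fbar(sqrt t) decays faster than any power of t. Since h = o(log t / t), h = O(t^(-7/8)),
  and the mean value theorem bounds the increment by O(t^(-3/8) Fbar(t/2a)). Finally,
  integrating h = o(log t / t) over [t/c, t/b] shows Fbar(t/c) = O(t^(1/4) Fbar(t/b)), so
  both terms are O(t^(-1/8) Fbar(t/b)).
\<close>

lemma distribution_function_bounds:
  assumes "distribution_function F"
  shows "0 \<le> F x" and "F x \<le> 1"
proof -
  have F: "mono F" "(F \<longlongrightarrow> 0) at_bot" "(F \<longlongrightarrow> 1) at_top"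
    using assms by (auto simp: distribution_function_def)
  show "0 \<le> F x"
    using F(2) by (rule tendsto_upperbound)
      (auto simp: eventually_at_bot_linorder intro!: exI[of _ x] monoD[OF F(1)])
  show "F x \<le> 1"
    using F(3) by (rule tendsto_lowerbound)
      (auto simp: eventually_at_top_linorder intro!: exI[of _ x] monoD[OF F(1)])
qed

lemma tail_bounds:
  assumes "distribution_function F"
  shows "0 \<le> tail F x" and "tail F x \<le> 1"
  using distribution_function_bounds[OF assms, of x] by (auto simp: tail_def)

lemma tail_antimono:
  assumes "distribution_function F" and "x \<le> y"
  shows "tail F y \<le> tail F x"
  using assms by (auto simp: distribution_function_def tail_def dest: monoD)

lemma tail_scale_df [simp]: "tail (scale_df c F) t = tail F (t / c)"
  by (simp add: tail_def scale_df_def)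

lemma
  assumes "distribution_function K"
  shows prob_space_interval_measure: "prob_space (interval_measure K)"
    and measure_interval_measure_Ioi: "measure (interval_measure K) {x<..} = tail K x"
proof -
  have K: "\<And>x y. x \<le> y \<Longrightarrow> K x \<le> K y" "\<And>x. continuous (at_right x) K"
    "(K \<longlongrightarrow> 0) at_bot" "(K \<longlongrightarrow> 1) at_top"
    using assms by (auto simp: distribution_function_def mono_def)
  show "prob_space (interval_measure K)"
    using real_distribution_interval_measure[OF K] by (simp add: real_distribution_def)
  then interpret prob_space "interval_measure K" .
  have "measure (interval_measure K) (UNIV - {..x}) = 1 - K x"
    using measure_interval_measure_Iic[OF K(1-3)] prob_compl[of "{..x}"] by simp
  moreover have "UNIV - {..x} = {x<..}" by auto
  ultimately show "measure (interval_measure K) {x<..} = tail K x"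
    by (simp add: tail_def)
qed

section \<open>The operator T_K\<close>

lemma T_op_eq_integral:
  "T_op K f t = (\<integral>x. indicator {..t/2} x * f (t - x) \<partial>interval_measure K)"
  by (simp add: T_op_def set_lebesgue_integral_def)

lemma integrable_interval_measure_indicator:
  assumes "distribution_function K" and "A \<in> sets borel"
  shows "integrable (interval_measure K) (indicator A :: real \<Rightarrow> real)"
proof -
  interpret prob_space "interval_measure K"
    by (rule prob_space_interval_measure[OF assms(1)])
  have "A \<in> sets (interval_measure K)"
    using assms(2) by simp
  then show ?thesis
    by (intro integrable_real_indicator) (simp_all add: less_top[symmetric])
qed

lemma integrable_T_op_integrand:
  fixes f :: "real \<Rightarrow> real"
  assumes K: "distribution_function K" and f: "antimono f" "\<And>x. 0 \<le> f x" "\<And>x. f x \<le> 1"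
  shows "integrable (interval_measure K) (\<lambda>x. indicator {..t/2} x * f (t - x))"
proof -
  interpret prob_space "interval_measure K"
    by (rule prob_space_interval_measure[OF K])
  have sets: "sets (interval_measure K) = sets borel"
    by simp
  have "mono (\<lambda>x. f (t - x))"
    using f(1) by (auto simp: mono_def antimono_def)
  then have "(\<lambda>x. f (t - x)) \<in> borel_measurable (interval_measure K)"
    unfolding measurable_cong_sets[OF sets refl] by (rule borel_measurable_mono)
  then have "(\<lambda>x. indicator {..t/2} x * f (t - x)) \<in> borel_measurable (interval_measure K)"
    by (intro borel_measurable_times borel_measurable_indicator) simp_all
  then show ?thesis
    using f(2,3)
    by (intro integrable_const_bound[where B = 1]) (auto simp: indicator_def)
qed

lemma T_op_le:
  assumes K: "distribution_function K" and f: "antimono f" "\<And>x. 0 \<le> f x" "\<And>x. f x \<le> 1"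
    and L: "0 \<le> L" "L \<le> t / 2"
  shows "T_op K f t \<le> f (t - L) + f (t / 2) * tail K L"
proof -
  interpret prob_space "interval_measure K"
    by (rule prob_space_interval_measure[OF K])
  have "T_op K f t \<le> (\<integral>x. f (t - L) + f (t / 2) * indicator {L<..} x \<partial>interval_measure K)"
    unfolding T_op_eq_integral
  proof (rule integral_mono[OF integrable_T_op_integrand[OF K f]])
    show "integrable (interval_measure K) (\<lambda>x. f (t - L) + f (t / 2) * indicator {L<..} x)"
      using integrable_interval_measure_indicator[OF K] by simp
    show "indicator {..t/2} x * f (t - x) \<le> f (t - L) + f (t / 2) * indicator {L<..} x" for x
      using L f(2)[of "t - L"] f(2)[of "t / 2"] f(2)[of "t - x"]
        antimonoD[OF f(1), of "t - L" "t - x"] antimonoD[OF f(1), of "t / 2" "t - x"]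
      by (auto simp: indicator_def)
  qed
  also have "\<dots> = f (t - L) + f (t / 2) * tail K L"
    using integrable_interval_measure_indicator[OF K] prob_space
    by (simp add: measure_interval_measure_Ioi[OF K])
  finally show ?thesis .
qed

lemma T_op_ge:
  assumes K: "distribution_function K" and f: "antimono f" "\<And>x. 0 \<le> f x" "\<And>x. f x \<le> 1"
    and L: "0 \<le> L" "L \<le> t / 2"
  shows "f (t + L) * (1 - neg_tail K L - tail K (t / 2)) \<le> T_op K f t"
proof -
  interpret prob_space "interval_measure K"
    by (rule prob_space_interval_measure[OF K])
  have "f (t + L) * (1 - neg_tail K L - tail K (t / 2))
      = (\<integral>x. f (t + L) * (1 - indicator {..< -L} x - indicator {t/2<..} x) \<partial>interval_measure K)"
    using integrable_interval_measure_indicator[OF K] prob_space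
    by (simp add: measure_interval_measure_Ioi[OF K] neg_tail_def)
  also have "\<dots> \<le> T_op K f t"
    unfolding T_op_eq_integral
  proof (rule integral_mono[OF _ integrable_T_op_integrand[OF K f]])
    show "integrable (interval_measure K)
        (\<lambda>x. f (t + L) * (1 - indicator {..< -L} x - indicator {t/2<..} x))"
      using integrable_interval_measure_indicator[OF K] by simp
    show "f (t + L) * (1 - indicator {..< -L} x - indicator {t/2<..} x)
        \<le> indicator {..t/2} x * f (t - x)" for x
      using L f(2)[of "t + L"] f(2)[of "t - x"] antimonoD[OF f(1), of "t - x" "t + L"]
      by (auto simp: indicator_def)
  qed
  finally show ?thesis .
qed

lemma abs_T_op_diff_le:
  assumes F: "distribution_function F" and K: "K \<in> B_class F M" and M: "0 \<le> M"
    and f: "antimono f" "\<And>x. 0 \<le> f x" "\<And>x. f x \<le> 1"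
    and L: "0 \<le> L" "L \<le> t / 2"
  shows "\<bar>T_op K f t - f t\<bar> \<le> (f (t - L) - f (t + L)) + 2 * M * f (t / 2) * tail F L"
proof -
  have dK: "distribution_function K"
    and tail_K: "\<And>x. 0 \<le> x \<Longrightarrow> tail K x \<le> M * tail F x"
    and neg_tail_K: "\<And>x. 0 \<le> x \<Longrightarrow> neg_tail K x \<le> M * tail F x"
    using K by (auto simp: B_class_def)
  note f_le = antimonoD[OF f(1)]
  have "f (t / 2) * tail K L \<le> f (t / 2) * (M * tail F L)"
    using tail_K[OF L(1)] f(2) by (rule mult_left_mono)
  then have upper: "T_op K f t - f t \<le> (f (t - L) - f (t + L)) + M * f (t / 2) * tail F L"
    using T_op_le[OF dK f L] f_le[of t "t + L"] L(1) by (simp add: algebra_simps)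
  have "tail F (t / 2) \<le> tail F L"
    using tail_antimono[OF F L(2)] .
  then have "neg_tail K L + tail K (t / 2) \<le> 2 * M * tail F L"
    using neg_tail_K[OF L(1)] tail_K[of "t / 2"] L M mult_left_mono[of _ _ M] by fastforce
  moreover have "0 \<le> neg_tail K L + tail K (t / 2)"
    using tail_bounds(1)[OF dK] by (simp add: neg_tail_def)
  ultimately have "f (t + L) * (neg_tail K L + tail K (t / 2)) \<le> f (t / 2) * (2 * M * tail F L)"
    using f(2) f_le[of "t / 2" "t + L"] L by (intro mult_mono) auto
  then have lower: "f t - T_op K f t \<le> (f (t - L) - f (t + L)) + 2 * M * f (t / 2) * tail F L"
    using T_op_ge[OF dK f L] f_le[of "t - L" t] L(1) by (simp add: algebra_simps)
  have "0 \<le> M * f (t / 2) * tail F L"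
    using M f(2) tail_bounds(1)[OF F] by simp
  with upper lower show ?thesis
    by linarith
qed

lemma sqrt_le_half:
  fixes t :: real
  assumes "4 \<le> t"
  shows "sqrt t \<le> t / 2"
proof -
  have "2 \<le> sqrt t"
    using real_sqrt_le_mono[OF assms] by simp
  then have "2 * sqrt t \<le> sqrt t * sqrt t"
    by (intro mult_right_mono) linarith+
  then show ?thesis
    using assms by simp
qed

lemma T_op_diff_bigo:
  assumes F: "distribution_function F" and K: "K \<in> B_class F M" and "0 \<le> M"
    and f: "antimono f" "\<And>x. 0 \<le> f x" "\<And>x. f x \<le> 1"
  shows "(\<lambda>t. T_op K f t - f t)
    \<in> O[at_top](\<lambda>t. (f (t - sqrt t) - f (t + sqrt t)) + 2 * M * f (t / 2) * tail F (sqrt t))"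
proof (rule landau_o.big_mono)
  show "\<forall>\<^sub>F t in at_top. norm (T_op K f t - f t)
      \<le> norm ((f (t - sqrt t) - f (t + sqrt t)) + 2 * M * f (t / 2) * tail F (sqrt t))"
    using eventually_ge_at_top[of 4]
  proof eventually_elim
    case (elim t)
    then show ?case
      using abs_T_op_diff_le[OF F K \<open>0 \<le> M\<close> f, of "sqrt t" t] sqrt_le_half by simp
  qed
qed

section \<open>Tail estimates from the hazard rate\<close>

lemma hazard_rate_tail_deriv:
  assumes "hazard_rate F h"
  obtains t0 where "\<And>t. t0 \<le> t \<Longrightarrow> 0 < tail F t"
    and "\<And>t. t0 \<le> t \<Longrightarrow> (tail F has_real_derivative - (h t * tail F t)) (at t)"
proof -
  obtain t0 where t0: "\<forall>t\<ge>t0. F t < 1 \<and> (F has_real_derivative (h t * (1 - F t))) (at t)"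
    using assms by (auto simp: hazard_rate_def)
  have "tail F = (\<lambda>t. 1 - F t)"
    by (simp add: tail_def fun_eq_iff)
  show thesis
  proof (rule that)
    show "0 < tail F t" if "t0 \<le> t" for t
      using t0 that by (simp add: tail_def)
    show "(tail F has_real_derivative - (h t * tail F t)) (at t)" if "t0 \<le> t" for t
      using t0 that unfolding \<open>tail F = (\<lambda>t. 1 - F t)\<close>
      by (auto intro!: derivative_eq_intros)
  qed
qed

lemma tail_diff_le:
  assumes F: "distribution_function F"
    and deriv: "\<And>s. t0 \<le> s \<Longrightarrow> (tail F has_real_derivative - (h s * tail F s)) (at s)"
    and xy: "t0 \<le> x" "x \<le> y" and h: "\<And>z. x \<le> z \<Longrightarrow> z \<le> y \<Longrightarrow> h z \<le> B" and B: "0 \<le> B"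
  shows "tail F x - tail F y \<le> (y - x) * B * tail F x"
proof (cases "x = y")
  case False
  with xy have "x < y" by simp
  with deriv xy obtain z where z: "x < z" "z < y"
    and eq: "tail F y - tail F x = (y - x) * - (h z * tail F z)"
    using MVT2[of x y "tail F" "\<lambda>s. - (h s * tail F s)"] by force
  have "h z * tail F z \<le> B * tail F z"
    using h z tail_bounds(1)[OF F] by (intro mult_right_mono) auto
  also have "\<dots> \<le> B * tail F x"
    using B tail_antimono[OF F] z by (intro mult_left_mono) auto
  finally have "(y - x) * (h z * tail F z) \<le> (y - x) * (B * tail F x)"
    using xy by (intro mult_left_mono) auto
  with eq show ?thesis
    by (simp add: algebra_simps)
qed simp

lemma tail_le_exp_mult_tail:
  assumes deriv: "\<And>s. t0 \<le> s \<Longrightarrow> (tail F has_real_derivative - (h s * tail F s)) (at s)"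
    and pos: "\<And>s. t0 \<le> s \<Longrightarrow> 0 < tail F s"
    and xy: "t0 \<le> x" "x \<le> y" and h: "\<And>z. x \<le> z \<Longrightarrow> z \<le> y \<Longrightarrow> h z \<le> B"
  shows "tail F x \<le> exp ((y - x) * B) * tail F y"
proof (cases "x = y")
  case False
  with xy have "x < y" by simp
  have "((\<lambda>s. ln (tail F s)) has_real_derivative - h s) (at s)" if "t0 \<le> s" for s
  proof -
    have "inverse (tail F s) * - (h s * tail F s) = - h s"
      using pos[OF that] by (simp add: field_simps)
    then show ?thesis
      using DERIV_chain2[OF DERIV_ln deriv] pos that by (metis DERIV_cong)
  qed
  with xy \<open>x < y\<close> obtain z where z: "x < z" "z < y"
    and eq: "ln (tail F y) - ln (tail F x) = (y - x) * - h z"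
    using MVT2[of x y "\<lambda>s. ln (tail F s)" "\<lambda>s. - h s"] by force
  have "(y - x) * h z \<le> (y - x) * B"
    using h z xy by (intro mult_left_mono) auto
  with eq have "ln (tail F x) \<le> (y - x) * B + ln (tail F y)"
    by simp
  then have "tail F x \<le> exp ((y - x) * B + ln (tail F y))"
    using pos[OF xy(1)] by (metis exp_le_cancel_iff exp_ln)
  also have "\<dots> = exp ((y - x) * B) * tail F y"
    using pos xy by (simp add: exp_add)
  finally show ?thesis .
qed simp

lemma tail_mult_powr_decreasing:
  assumes pos: "\<And>s. t0 \<le> s \<Longrightarrow> 0 < tail F s"
    and deriv: "\<And>s. t0 \<le> s \<Longrightarrow> (tail F has_real_derivative - (h s * tail F s)) (at s)"
    and S: "\<And>s. S \<le> s \<Longrightarrow> p \<le> s * h s"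
    and "0 < s0" "t0 \<le> s0" "S \<le> s0" and "s0 \<le> s"
  shows "tail F s * s powr p \<le> tail F s0 * s0 powr p"
proof (rule DERIV_nonpos_imp_nonincreasing[OF \<open>s0 \<le> s\<close>])
  fix x assume "s0 \<le> x"
  then have "0 < x" "t0 \<le> x" "S \<le> x"
    using \<open>0 < s0\<close> \<open>t0 \<le> s0\<close> \<open>S \<le> s0\<close> by auto
  have "((\<lambda>s. tail F s * s powr p) has_real_derivative
      - (h x * tail F x) * x powr p + p * x powr (p - 1) * tail F x) (at x)"
    by (rule DERIV_mult[OF deriv[OF \<open>t0 \<le> x\<close>] has_real_derivative_powr[OF \<open>0 < x\<close>]])
  moreover have "- (h x * tail F x) * x powr p + p * x powr (p - 1) * tail F x
      = tail F x * x powr (p - 1) * (p - x * h x)"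
    using \<open>0 < x\<close> by (simp add: powr_diff field_simps)
  moreover have "tail F x * x powr (p - 1) * (p - x * h x) \<le> 0"
    using pos[OF \<open>t0 \<le> x\<close>] S[OF \<open>S \<le> x\<close>] by (intro mult_nonneg_nonpos) auto
  ultimately show "\<exists>y. ((\<lambda>s. tail F s * s powr p) has_real_derivative y) (at x) \<and> y \<le> 0"
    by auto
qed

lemma tail_bigo_powr:
  assumes "hazard_rate F h" and "filterlim (\<lambda>t. t * h t) at_top at_top"
  shows "tail F \<in> O[at_top](\<lambda>t. t powr - p)"
proof -
  obtain t0 where pos: "\<And>t. t0 \<le> t \<Longrightarrow> 0 < tail F t"
    and deriv: "\<And>t. t0 \<le> t \<Longrightarrow> (tail F has_real_derivative - (h t * tail F t)) (at t)"
    using hazard_rate_tail_deriv[OF assms(1)] by blast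
  obtain S where S: "\<And>s. S \<le> s \<Longrightarrow> p \<le> s * h s"
    using assms(2) by (auto simp: filterlim_at_top eventually_at_top_linorder)
  define s0 where "s0 = max 1 (max t0 S)"
  have s0: "0 < s0" "t0 \<le> s0" "S \<le> s0"
    by (auto simp: s0_def)
  have "\<forall>\<^sub>F s in at_top. norm (tail F s) \<le> (tail F s0 * s0 powr p) * norm (s powr - p)"
    using eventually_ge_at_top[of s0]
  proof eventually_elim
    case (elim s)
    then have "0 < s" "t0 \<le> s"
      using s0 by auto
    then have "tail F s = tail F s * s powr p * s powr - p"
      by (simp add: powr_minus)
    also have "\<dots> \<le> (tail F s0 * s0 powr p) * s powr - p"
    proof (rule mult_right_mono)
      show "tail F s * s powr p \<le> tail F s0 * s0 powr p"
        by (rule tail_mult_powr_decreasing[OF pos deriv S s0 elim])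
    qed simp
    finally show ?case
      using pos[OF \<open>t0 \<le> s\<close>] by simp
  qed
  then show ?thesis
    by (rule bigoI)
qed

lemma tail_sqrt_bigo_powr:
  assumes "hazard_rate F h" and "filterlim (\<lambda>t. t * h t) at_top at_top"
  shows "(\<lambda>t. tail F (sqrt t)) \<in> O[at_top](\<lambda>t. t powr - p)"
proof -
  have "(\<lambda>t. tail F (sqrt t)) \<in> O[at_top](\<lambda>t. sqrt t powr - (2 * p))"
    by (rule landau_o.big.compose[OF tail_bigo_powr[OF assms] sqrt_at_top])
  moreover have "\<forall>\<^sub>F t in at_top. sqrt t powr - (2 * p) = t powr - p"
    using eventually_gt_at_top[of 0]
    by eventually_elim (simp add: powr_half_sqrt[symmetric] powr_powr)
  ultimately show ?thesis
    by (simp add: landau_o.big.cong)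
qed

lemma tail_le_powr_mult_tail_at:
  assumes deriv: "\<And>s. t0 \<le> s \<Longrightarrow> (tail F has_real_derivative - (h s * tail F s)) (at s)"
    and pos: "\<And>s. t0 \<le> s \<Longrightarrow> 0 < tail F s"
    and U: "\<And>u. U \<le> u \<Longrightarrow> \<bar>h u\<bar> \<le> \<epsilon> / (2 * (c - 1)) * \<bar>ln u / u\<bar>"
    and "1 < c" "0 < \<epsilon>" and "max c (max U (max t0 1)) \<le> x"
  shows "tail F x \<le> x powr \<epsilon> * tail F (c * x)"
proof -
  define \<delta> where "\<delta> = \<epsilon> / (2 * (c - 1))"
  have x: "c \<le> x" "U \<le> x" "t0 \<le> x" "1 \<le> x"
    using \<open>max c (max U (max t0 1)) \<le> x\<close> by auto
  have "x \<le> c * x"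
    using x \<open>1 < c\<close> by simp
  have h_le: "h z \<le> \<delta> * (ln (c * x) / x)" if "x \<le> z" "z \<le> c * x" for z
  proof -
    have "h z \<le> \<delta> * (ln z / z)"
      using U[of z] that x by (simp add: \<delta>_def abs_le_iff)
    also have "\<dots> \<le> \<delta> * (ln (c * x) / x)"
      using that x \<open>1 < c\<close> \<open>0 < \<epsilon>\<close> by (intro mult_left_mono frac_le) (auto simp: \<delta>_def)
    finally show ?thesis .
  qed
  have "(c * x - x) * (\<delta> * (ln (c * x) / x)) = \<epsilon> / 2 * (ln c + ln x)"
    using x \<open>1 < c\<close> by (simp add: \<delta>_def ln_mult field_simps)
  also have "\<dots> \<le> \<epsilon> * ln x"
    using x \<open>1 < c\<close> \<open>0 < \<epsilon>\<close> by simp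
  finally have exp_le: "exp ((c * x - x) * (\<delta> * (ln (c * x) / x))) \<le> x powr \<epsilon>"
    using x by (simp add: powr_def mult.commute)
  have "tail F x \<le> exp ((c * x - x) * (\<delta> * (ln (c * x) / x))) * tail F (c * x)"
    by (rule tail_le_exp_mult_tail[OF deriv pos x(3) \<open>x \<le> c * x\<close> h_le])
  also have "\<dots> \<le> x powr \<epsilon> * tail F (c * x)"
    using exp_le pos[of "c * x"] x \<open>x \<le> c * x\<close> by (intro mult_right_mono) auto
  finally show ?thesis .
qed

lemma tail_le_powr_mult_tail:
  assumes "hazard_rate F h" and h: "h \<in> o[at_top](\<lambda>t. ln t / t)" and "1 < c" and "0 < \<epsilon>"
  shows "\<forall>\<^sub>F x in at_top. tail F x \<le> x powr \<epsilon> * tail F (c * x)"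
proof -
  obtain t0 where pos: "\<And>t. t0 \<le> t \<Longrightarrow> 0 < tail F t"
    and deriv: "\<And>t. t0 \<le> t \<Longrightarrow> (tail F has_real_derivative - (h t * tail F t)) (at t)"
    using hazard_rate_tail_deriv[OF assms(1)] by blast
  have "0 < \<epsilon> / (2 * (c - 1))"
    using \<open>1 < c\<close> \<open>0 < \<epsilon>\<close> by simp
  from landau_o.smallD[OF h this] obtain U
    where U: "\<And>u. U \<le> u \<Longrightarrow> \<bar>h u\<bar> \<le> \<epsilon> / (2 * (c - 1)) * \<bar>ln u / u\<bar>"
    by (auto simp: eventually_at_top_linorder)
  show ?thesis
    using eventually_ge_at_top[of "max c (max U (max t0 1))"]
    by eventually_elim (rule tail_le_powr_mult_tail_at[OF deriv pos U \<open>1 < c\<close> \<open>0 < \<epsilon>\<close>])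
qed

lemma tail_scaled_bigo_powr:
  assumes F: "distribution_function F" and hazard: "hazard_rate F h"
    and h: "h \<in> o[at_top](\<lambda>t. ln t / t)" and "0 < b" "0 < c" "0 < \<epsilon>"
  shows "(\<lambda>t. tail F (t / c)) \<in> O[at_top](\<lambda>t. t powr \<epsilon> * tail F (t / b))"
proof (cases "c \<le> b")
  case True
  have "\<forall>\<^sub>F t in at_top. tail F (t / c) \<le> t powr \<epsilon> * tail F (t / b)"
    using eventually_ge_at_top[of 1]
  proof eventually_elim
    case (elim t)
    have "tail F (t / c) \<le> tail F (t / b)"
      using True elim \<open>0 < c\<close> by (intro tail_antimono[OF F] frac_le) auto
    also have "\<dots> \<le> t powr \<epsilon> * tail F (t / b)"
      using mult_right_mono[OF ge_one_powr_ge_zero tail_bounds(1)[OF F]] elim \<open>0 < \<epsilon>\<close> by simp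
    finally show ?case .
  qed
  then show ?thesis
    by (intro bigoI[where c = 1]) (auto simp: tail_bounds(1)[OF F] elim!: eventually_mono)
next
  case False
  have "filterlim (\<lambda>t. t * inverse c) at_top at_top"
    using \<open>0 < c\<close> by (intro filterlim_at_top_mult_tendsto_pos[OF tendsto_const] filterlim_ident) simp
  from eventually_compose_filterlim[OF tail_le_powr_mult_tail[OF hazard h _ \<open>0 < \<epsilon>\<close>, of "c / b"] this]
  have "\<forall>\<^sub>F t in at_top. tail F (t / c) \<le> c powr - \<epsilon> * (t powr \<epsilon> * tail F (t / b))"
    using False \<open>0 < b\<close> \<open>0 < c\<close> by (simp add: powr_divide powr_minus field_simps)
  then show ?thesis
    by (intro bigoI[where c = "c powr - \<epsilon>"]) (auto simp: tail_bounds(1)[OF F] elim!: eventually_mono)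
qed

lemma tail_diff_le_powr:
  assumes F: "distribution_function F"
    and deriv: "\<And>s. t0 \<le> s \<Longrightarrow> (tail F has_real_derivative - (h s * tail F s)) (at s)"
    and h: "\<And>u. U \<le> u \<Longrightarrow> h u \<le> C * u powr - q" and "0 \<le> C" "0 \<le> q"
    and m: "0 < m" "U \<le> m" "t0 \<le> m" and "m \<le> x" "x \<le> y"
  shows "tail F x - tail F y \<le> (y - x) * C * m powr - q * tail F m"
proof -
  have h_le: "h z \<le> C * m powr - q" if "x \<le> z" "z \<le> y" for z
  proof -
    have "h z \<le> C * z powr - q"
      using h[of z] that \<open>m \<le> x\<close> m by simp
    also have "\<dots> \<le> C * m powr - q"
      using that \<open>m \<le> x\<close> m \<open>0 \<le> C\<close> \<open>0 \<le> q\<close> by (intro mult_left_mono powr_mono2') auto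
    finally show ?thesis .
  qed
  have "tail F x - tail F y \<le> (y - x) * (C * m powr - q) * tail F x"
    using \<open>m \<le> x\<close> \<open>x \<le> y\<close> m \<open>0 \<le> C\<close> by (intro tail_diff_le[OF F deriv _ _ h_le]) auto
  also have "\<dots> \<le> (y - x) * (C * m powr - q) * tail F m"
    using \<open>m \<le> x\<close> \<open>x \<le> y\<close> \<open>0 \<le> C\<close> by (intro mult_left_mono tail_antimono[OF F]) auto
  finally show ?thesis
    by (simp add: mult.assoc)
qed

lemma tail_sqrt_increment_bigo:
  assumes F: "distribution_function F" and hazard: "hazard_rate F h"
    and h: "h \<in> O[at_top](\<lambda>t. t powr - q)" and "0 \<le> q" and "0 < a"
  shows "(\<lambda>t. tail F ((t - sqrt t) / a) - tail F ((t + sqrt t) / a))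
    \<in> O[at_top](\<lambda>t. t powr (1/2 - q) * tail F (t / (2 * a)))"
proof -
  obtain t0 where deriv: "\<And>t. t0 \<le> t \<Longrightarrow> (tail F has_real_derivative - (h t * tail F t)) (at t)"
    using hazard_rate_tail_deriv[OF hazard] by blast
  from h obtain C where "0 < C" and "\<forall>\<^sub>F u in at_top. \<bar>h u\<bar> \<le> C * \<bar>u powr - q\<bar>"
    by (elim landau_o.bigE) auto
  then obtain U where U: "\<And>u. U \<le> u \<Longrightarrow> h u \<le> C * u powr - q"
    by (auto simp: eventually_at_top_linorder abs_le_iff)
  have "\<forall>\<^sub>F t in at_top. norm (tail F ((t - sqrt t) / a) - tail F ((t + sqrt t) / a))
      \<le> (2 * C * (2 * a) powr q / a) * norm (t powr (1/2 - q) * tail F (t / (2 * a)))"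
    using eventually_ge_at_top[of "max 4 (2 * a * max 1 (max U t0))"]
  proof eventually_elim
    case (elim t)
    define m x y where "m = t / (2 * a)" and "x = (t - sqrt t) / a" and "y = (t + sqrt t) / a"
    have "max 1 (max U t0) \<le> m"
      using elim \<open>0 < a\<close> by (simp add: m_def pos_le_divide_eq mult.commute del: max.bounded_iff)
    then have m: "0 < m" "U \<le> m" "t0 \<le> m"
      by auto
    have "4 \<le> t"
      using elim by simp
    then have "m \<le> x" and "x \<le> y"
      using sqrt_le_half[of t] \<open>0 < a\<close> by (auto simp: m_def x_def y_def field_simps)
    have "t powr (1/2 - q) = sqrt t * t powr - q"
      using \<open>4 \<le> t\<close> by (subst powr_half_sqrt[symmetric]) (simp_all add: powr_add[symmetric])
    then have "(y - x) * C * m powr - q * tail F m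
        = (2 * C * (2 * a) powr q / a) * (t powr (1/2 - q) * tail F m)"
      using \<open>0 < a\<close> by (simp add: m_def x_def y_def powr_divide powr_minus field_simps)
    with tail_diff_le_powr[OF F deriv U _ \<open>0 \<le> q\<close> m \<open>m \<le> x\<close> \<open>x \<le> y\<close>] \<open>0 < C\<close>
    show ?case
      using tail_antimono[OF F \<open>x \<le> y\<close>] tail_bounds(1)[OF F] by (simp add: m_def x_def y_def)
  qed
  then show ?thesis
    by (rule bigoI)
qed

lemma T_op_tail_scale_diff_bigo:
  assumes F: "distribution_function F" and hazard: "hazard_rate F h"
    and lim: "filterlim (\<lambda>t. t * h t) at_top at_top"
    and h: "h \<in> O[at_top](\<lambda>t. t powr - q)" and "0 \<le> q"
    and K: "K \<in> B_class F M" and "0 < M" and "0 < a"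
  shows "(\<lambda>t. T_op K (tail (scale_df a F)) t - tail (scale_df a F) t)
    \<in> O[at_top](\<lambda>t. t powr (1/2 - q) * tail F (t / (2 * a)))"
proof -
  define f where "f = tail (scale_df a F)"
  define Q where "Q t = tail F (t / (2 * a))" for t
  have f: "antimono f" "\<And>x. 0 \<le> f x" "\<And>x. f x \<le> 1"
    using \<open>0 < a\<close> tail_bounds[OF F]
    by (auto simp: f_def antimono_def intro!: tail_antimono[OF F] divide_right_mono)
  have "(\<lambda>t. Q t * tail F (sqrt t)) \<in> O[at_top](\<lambda>t. Q t * t powr - (q - 1/2))"
    by (rule landau_o.big.mult_left[OF tail_sqrt_bigo_powr[OF hazard lim]])
  then have "(\<lambda>t. 2 * M * (Q t * tail F (sqrt t))) \<in> O[at_top](\<lambda>t. t powr (1/2 - q) * Q t)"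
    using \<open>0 < M\<close> by (simp add: mult.commute)
  moreover have "(\<lambda>t. 2 * M * (Q t * tail F (sqrt t))) = (\<lambda>t. 2 * M * f (t / 2) * tail F (sqrt t))"
    by (simp add: fun_eq_iff f_def Q_def mult.assoc)
  moreover have "(\<lambda>t. f (t - sqrt t) - f (t + sqrt t)) \<in> O[at_top](\<lambda>t. t powr (1/2 - q) * Q t)"
    using tail_sqrt_increment_bigo[OF F hazard h \<open>0 \<le> q\<close> \<open>0 < a\<close>] by (simp add: f_def Q_def)
  ultimately have "(\<lambda>t. (f (t - sqrt t) - f (t + sqrt t)) + 2 * M * f (t / 2) * tail F (sqrt t))
      \<in> O[at_top](\<lambda>t. t powr (1/2 - q) * Q t)"
    by (simp add: sum_in_bigo)
  with T_op_diff_bigo[OF F K less_imp_le[OF \<open>0 < M\<close>] f]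
  have "(\<lambda>t. T_op K f t - f t) \<in> O[at_top](\<lambda>t. t powr (1/2 - q) * Q t)"
    by (rule landau_o.big_trans)
  then show ?thesis
    unfolding f_def Q_def .
qed

lemma smallo_if_bigo_powr_mult:
  fixes f g :: "real \<Rightarrow> real" and r :: real
  assumes "f \<in> O[at_top](\<lambda>t. t powr r * g t)" and "r < 0"
  shows "f \<in> o[at_top](g)"
proof -
  have "(\<lambda>t. t powr r) \<in> o[at_top](\<lambda>_. 1)"
    using tendsto_neg_powr[of r "\<lambda>t. t" at_top] \<open>r < 0\<close> filterlim_ident
    by (intro smalloI_tendsto) auto
  then have "(\<lambda>t. t powr r * g t) \<in> o[at_top](\<lambda>t. 1 * g t)"
    by (rule landau_o.small_big_mult) simp
  with assms(1) show ?thesis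
    by (simp add: landau_o.big_small_trans)
qed

theorem lemma4p3p2:
  fixes F h K :: "real \<Rightarrow> real" and M :: real
  assumes "distribution_function F"
    and "hazard_rate F h"
    and "cond_H h"
    and "h \<in> o[at_top](\<lambda>t. ln t / t)"
    and "Limsup at_top (\<lambda>t. ereal (t * (h t)\<^sup>2 / h (1 / h t))) < \<infinity>"
    and "M > 0"
    and "K \<in> B_class F M"
  shows "\<forall>a>0. \<forall>b>0.
    (\<lambda>t. T_op K (tail (scale_df a F)) t - tail (scale_df a F) t)
      \<in> o[at_top](tail (scale_df b F))"
proof (intro allI impI)
  fix a b :: real assume "0 < a" "0 < b"
  note F = assms(1) and hazard = assms(2) and h = assms(4)
  have lim: "filterlim (\<lambda>t. t * h t) at_top at_top"
    using assms(3) by (simp add: cond_H_def)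
  have "(\<lambda>t. ln t / t) \<in> O[at_top](\<lambda>t. t powr - (7/8 :: real))"
    by real_asymp
  with h have "h \<in> O[at_top](\<lambda>t. t powr - (7/8))"
    by (rule landau_o.small_big_trans[THEN landau_o.small_imp_big])
  from T_op_tail_scale_diff_bigo[OF F hazard lim this _ assms(7,6) \<open>0 < a\<close>]
  have "(\<lambda>t. T_op K (tail (scale_df a F)) t - tail (scale_df a F) t)
      \<in> O[at_top](\<lambda>t. t powr (-3/8) * tail F (t / (2 * a)))"
    by simp
  moreover have "(\<lambda>t. tail F (t / (2 * a))) \<in> O[at_top](\<lambda>t. t powr (1/4) * tail F (t / b))"
    using tail_scaled_bigo_powr[OF F hazard h \<open>0 < b\<close>] \<open>0 < a\<close> by simp
  then have "(\<lambda>t. t powr (-3/8) * tail F (t / (2 * a))) \<in> o[at_top](tail (scale_df b F))"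
    by (intro smallo_if_bigo_powr_mult[where r = "-1/8"])
      (auto dest: landau_o.big.mult_left[of _ _ _ "\<lambda>t. t powr (-3/8)"]
        simp: powr_add[symmetric] mult.assoc[symmetric])
  ultimately show "(\<lambda>t. T_op K (tail (scale_df a F)) t - tail (scale_df a F) t)
      \<in> o[at_top](tail (scale_df b F))"
    by (rule landau_o.big_small_trans)
qed

end
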